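(* Let $X_1$ be a connected graph with at least two vertices, $X_2=K_2$ with $V(X_2)=\{1,2\}$, and $X=X_1\square X_2$. Let $\{a,b\}\in E(X_1)$ with $-2\notin\Lambda_{\mathbf f_{ab}}$, let $\varepsilon_1$ be the edge of $X$ joining $(a,1),(b,1)$ and $\varepsilon_2$ the edge joining $(a,2),(b,2)$. Then $\mathbf h_{\varepsilon_1}$ and $\mathbf h_{\varepsilon_2}$ are strongly cospectral with respect to the adjacency matrix $A_{\mathcal L}$ of $\mathcal L(X)$ if and only if $|\vartheta-\vartheta'|\neq2$ for all $\vartheta,\vartheta'\in\Lambda_{\mathbf f_{ab}}$. Moreover, if they are strongly cospectral, then $$\Psi^-_{\mathbf h_{\varepsilon_1},\mathbf h_{\varepsilon_2}}=\Lambda_{\mathbf f_{ab}},\qquad \Psi^+_{\mathbf h_{\varepsilon_1},\mathbf h_{\varepsilon_2}}=\{\vartheta+2:\vartheta\in\Lambda_{\mathbf f_{ab}}\}\cup\{-2\}.$$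
   Context: $X_1\square X_2$ is the Cartesian product (vertex set $V(X_1)\times V(X_2)$, $(x,y)\sim(x',y')$ iff ($x=x'$, $y\sim y'$) or ($y=y'$, $x\sim x'$)). The line graph $\mathcal L(Y)$ has vertex set $E(Y)$, edges adjacent iff they share an endpoint. $\mathbf h_\varepsilon$ is the vertex state in $\mathcal L(X)$ of edge $\varepsilon$; $\mathbf f_{ab}$ the vertex state in $\mathcal L(X_1)$ of $\{a,b\}$, and $\Lambda_{\mathbf f_{ab}}$ its eigenvalue support with respect to the adjacency matrix of $\mathcal L(X_1)$. With $A_{\mathcal L}=\sum_\vartheta\vartheta F_\vartheta$ (orthogonal spectral projections), $\Psi^\pm_{\mathbf h_{\varepsilon_1},\mathbf h_{\varepsilon_2}}=\{\vartheta: F_\vartheta\mathbf h_{\varepsilon_1}=\pm F_\vartheta\mathbf h_{\varepsilon_2}\neq\mathbf 0\}$; strong cospectrality means $F_\vartheta\mathbf h_{\varepsilon_1}=\pm F_\vartheta\mathbf h_{\varepsilon_2}$ for every $\vartheta$. *)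

theory Defs
  imports "HOL-Analysis.Analysis"
begin

text \<open>Simple graphs: finite vertex set V with symmetric irreflexive adjacency
relation adj (assumed to relate only vertices of V). Edges are 2-sets.\<close>

definition graph_edges :: "'v set \<Rightarrow> ('v \<Rightarrow> 'v \<Rightarrow> bool) \<Rightarrow> 'v set set" where
  "graph_edges V adj = {{x, y} | x y. x \<in> V \<and> y \<in> V \<and> adj x y}"

definition graph_connected :: "'v set \<Rightarrow> ('v \<Rightarrow> 'v \<Rightarrow> bool) \<Rightarrow> bool" where
  "graph_connected V adj =
     (\<forall>x\<in>V. \<forall>y\<in>V. (\<lambda>u w. adj u w \<and> u \<in> V \<and> w \<in> V)\<^sup>*\<^sup>* x y)"

definition cart_adj :: "('a \<Rightarrow> 'a \<Rightarrow> bool) \<Rightarrow> ('b \<Rightarrow> 'b \<Rightarrow> bool)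
    \<Rightarrow> 'a \<times> 'b \<Rightarrow> 'a \<times> 'b \<Rightarrow> bool" where
  "cart_adj adj1 adj2 p q =
     ((fst p = fst q \<and> adj2 (snd p) (snd q)) \<or> (snd p = snd q \<and> adj1 (fst p) (fst q)))"

text \<open>Adjacency matrix of the line graph, indexed by edges (used on the edge set).\<close>
definition line_adj :: "'v set \<Rightarrow> 'v set \<Rightarrow> real" where
  "line_adj e f = (if e \<noteq> f \<and> e \<inter> f \<noteq> {} then 1 else 0)"

definition vertex_state :: "'i \<Rightarrow> 'i \<Rightarrow> real" where
  "vertex_state e = (\<lambda>f. if f = e then 1 else 0)"

text \<open>Eigenspace of a real matrix M indexed by the finite set S, for the value t
(the zero space if t is not an eigenvalue).\<close>
definition eigensp :: "'i set \<Rightarrow> ('i \<Rightarrow> 'i \<Rightarrow> real) \<Rightarrow> real \<Rightarrow> ('i \<Rightarrow> real) set" where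
  "eigensp S M t = {u. (\<forall>x. x \<notin> S \<longrightarrow> u x = 0) \<and>
                      (\<forall>x\<in>S. (\<Sum>y\<in>S. M x y * u y) = t * u x)}"

definition spec_proj :: "'i set \<Rightarrow> ('i \<Rightarrow> 'i \<Rightarrow> real) \<Rightarrow> real \<Rightarrow> ('i \<Rightarrow> real) \<Rightarrow> ('i \<Rightarrow> real)" where
  "spec_proj S M t v = (THE u. u \<in> eigensp S M t \<and>
       (\<forall>w\<in>eigensp S M t. (\<Sum>x\<in>S. (v x - u x) * w x) = 0))"

definition eig_support :: "'i set \<Rightarrow> ('i \<Rightarrow> 'i \<Rightarrow> real) \<Rightarrow> ('i \<Rightarrow> real) \<Rightarrow> real set" where
  "eig_support S M v = {t. spec_proj S M t v \<noteq> (\<lambda>_. 0)}"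

definition strongly_cospectral :: "'i set \<Rightarrow> ('i \<Rightarrow> 'i \<Rightarrow> real) \<Rightarrow> ('i \<Rightarrow> real) \<Rightarrow> ('i \<Rightarrow> real) \<Rightarrow> bool" where
  "strongly_cospectral S M u v =
     (\<forall>t. spec_proj S M t u = spec_proj S M t v \<or>
          spec_proj S M t u = (\<lambda>x. - spec_proj S M t v x))"

definition Psi_plus :: "'i set \<Rightarrow> ('i \<Rightarrow> 'i \<Rightarrow> real) \<Rightarrow> ('i \<Rightarrow> real) \<Rightarrow> ('i \<Rightarrow> real) \<Rightarrow> real set" where
  "Psi_plus S M u v = {t. spec_proj S M t u = spec_proj S M t v \<and> spec_proj S M t u \<noteq> (\<lambda>_. 0)}"

definition Psi_minus :: "'i set \<Rightarrow> ('i \<Rightarrow> 'i \<Rightarrow> real) \<Rightarrow> ('i \<Rightarrow> real) \<Rightarrow> ('i \<Rightarrow> real) \<Rightarrow> real set" where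
  "Psi_minus S M u v = {t. spec_proj S M t u = (\<lambda>x. - spec_proj S M t v x) \<and> spec_proj S M t u \<noteq> (\<lambda>_. 0)}"

end

theory Submission
  imports Defs
begin

(* The edges of X = X1 x K2 are two copies of E(X1) (the layers) and one rung per vertex of X1,
   so vectors on E(X) are triples (g1, g2, r).  The projection of h1 - h2 = (f, -f, 0) onto the
   t-eigenspace is (F_t f, -F_t f, 0); for t <> -2 the projection of h1 + h2 = (f, f, 0) is a lift
   (c g, c g, d N g) of g = F_(t-2) f, N the vertex-edge incidence matrix of X1, and at t = -2 it
   is nonzero.  So h1 - h2 has eigenvalue support Lambda and h1 + h2 has support
   (Lambda + 2) u {-2}.  Since F_t h1 = +-F_t h2 iff F_t kills h1 -+ h2, strong cospectrality says
   that these two supports are disjoint, i.e. that no two elements of Lambda differ by 2. *)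

section \<open>Orthogonal projections onto eigenspaces\<close>

definition inner_on :: "'i set \<Rightarrow> ('i \<Rightarrow> real) \<Rightarrow> ('i \<Rightarrow> real) \<Rightarrow> real" where
  "inner_on S u w = (\<Sum>x\<in>S. u x * w x)"

lemma inner_on_add_left: "inner_on S (\<lambda>x. u x + v x) w = inner_on S u w + inner_on S v w"
  by (simp add: inner_on_def distrib_right sum.distrib)

lemma inner_on_add_right: "inner_on S w (\<lambda>x. u x + v x) = inner_on S w u + inner_on S w v"
  by (simp add: inner_on_def distrib_left sum.distrib)

lemma inner_on_diff_left: "inner_on S (\<lambda>x. u x - v x) w = inner_on S u w - inner_on S v w"
  by (simp add: inner_on_def left_diff_distrib sum_subtractf)

lemma inner_on_scale_left: "inner_on S (\<lambda>x. c * u x) w = c * inner_on S u w"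
  by (simp add: inner_on_def sum_distrib_left mult.assoc)

lemma inner_on_scale_right: "inner_on S w (\<lambda>x. c * u x) = c * inner_on S w u"
  by (simp add: inner_on_def sum_distrib_left algebra_simps)

lemma inner_on_insert:
  "finite S \<Longrightarrow> s \<notin> S \<Longrightarrow> inner_on (insert s S) u w = u s * w s + inner_on S u w"
  by (simp add: inner_on_def)

lemma inner_on_self_nonneg: "inner_on S u u \<ge> 0"
  by (simp add: inner_on_def sum_nonneg)

lemma inner_on_self_eq_0: "finite S \<Longrightarrow> inner_on S u u = 0 \<Longrightarrow> x \<in> S \<Longrightarrow> u x = 0"
  unfolding inner_on_def using sum_nonneg_eq_0_iff[of S "\<lambda>x. u x * u x"] by auto

definition fun_subspace :: "'i set \<Rightarrow> ('i \<Rightarrow> real) set \<Rightarrow> bool" where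
  "fun_subspace S W \<longleftrightarrow> (\<lambda>_. 0) \<in> W \<and> (\<forall>u\<in>W. \<forall>w\<in>W. (\<lambda>x. u x + w x) \<in> W)
     \<and> (\<forall>c. \<forall>u\<in>W. (\<lambda>x. c * u x) \<in> W) \<and> (\<forall>u\<in>W. \<forall>x. x \<notin> S \<longrightarrow> u x = 0)"

lemma fun_subspace_add: "fun_subspace S W \<Longrightarrow> u \<in> W \<Longrightarrow> w \<in> W \<Longrightarrow> (\<lambda>x. u x + w x) \<in> W"
  unfolding fun_subspace_def by blast

lemma fun_subspace_scale: "fun_subspace S W \<Longrightarrow> u \<in> W \<Longrightarrow> (\<lambda>x. c * u x) \<in> W"
  unfolding fun_subspace_def by blast

lemma fun_subspace_diff: "fun_subspace S W \<Longrightarrow> u \<in> W \<Longrightarrow> w \<in> W \<Longrightarrow> (\<lambda>x. u x - w x) \<in> W"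
  using fun_subspace_add[of S W u "\<lambda>x. (-1) * w x"] fun_subspace_scale[of S W w "-1"] by simp

text \<open>One Gram--Schmidt step: a projection onto \<open>W'\<close> extends to one onto \<open>W = W' \<oplus> span {d}\<close>
  when \<open>d \<perp> W'\<close>.\<close>
lemma orthogonal_projection_extend:
  assumes W: "fun_subspace S W" and d: "d \<in> W" "inner_on S d d \<noteq> 0"
    and d_orth: "\<forall>w\<in>W'. inner_on S d w = 0"
    and decomp: "\<forall>w\<in>W. \<exists>w'\<in>W'. \<exists>c. w = (\<lambda>x. w' x + c * d x)"
    and u': "u' \<in> W" "\<forall>w\<in>W'. inner_on S (\<lambda>x. v x - u' x) w = 0"
  shows "\<exists>u\<in>W. \<forall>w\<in>W. inner_on S (\<lambda>x. v x - u x) w = 0"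
proof
  define c where "c = inner_on S (\<lambda>x. v x - u' x) d / inner_on S d d"
  define u where "u = (\<lambda>x. u' x + c * d x)"
  show "u \<in> W"
    unfolding u_def using fun_subspace_add[OF W u'(1) fun_subspace_scale[OF W d(1)]] .
  have residual: "(\<lambda>x. v x - u x) = (\<lambda>x. (v x - u' x) - c * d x)"
    unfolding u_def by auto
  have orth_W': "inner_on S (\<lambda>x. v x - u x) w' = 0" if "w' \<in> W'" for w'
    using u'(2) d_orth that by (simp add: residual inner_on_diff_left inner_on_scale_left)
  have orth_d: "inner_on S (\<lambda>x. v x - u x) d = 0"
    using d(2) unfolding residual inner_on_diff_left inner_on_scale_left c_def by simp
  show "\<forall>w\<in>W. inner_on S (\<lambda>x. v x - u x) w = 0"
  proof
    fix w assume "w \<in> W"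
    then obtain w' c' where "w' \<in> W'" "w = (\<lambda>x. w' x + c' * d x)"
      using decomp by blast
    then show "inner_on S (\<lambda>x. v x - u x) w = 0"
      using orth_W' orth_d by (simp add: inner_on_add_right inner_on_scale_right)
  qed
qed

lemma orthogonal_projection_exists:
  assumes "finite S" "fun_subspace S W"
  shows "\<exists>u\<in>W. \<forall>w\<in>W. inner_on S (\<lambda>x. v x - u x) w = 0"
  using assms
proof (induction S arbitrary: W v rule: finite_induct)
  case empty
  then show ?case unfolding fun_subspace_def inner_on_def by auto
next
  case (insert s S)
  define W' where "W' = {w\<in>W. w s = 0}"
  have sub': "fun_subspace S W'"
    using insert.prems unfolding fun_subspace_def W'_def by auto
  have inner_W': "inner_on (insert s S) u w = inner_on S u w" if "w \<in> W'" for u w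
    using that insert.hyps by (simp add: W'_def inner_on_insert)
  show ?case
  proof (cases "\<forall>w\<in>W. w s = 0")
    case True
    then have "W' = W" unfolding W'_def by auto
    with insert.IH[OF sub'] obtain u where "u \<in> W" "\<forall>w\<in>W. inner_on S (\<lambda>x. v x - u x) w = 0"
      by blast
    then show ?thesis using inner_W' \<open>W' = W\<close> by auto
  next
    case False
    then obtain w where w: "w \<in> W" "w s \<noteq> 0" by blast
    define w0 where "w0 = (\<lambda>x. inverse (w s) * w x)"
    have w0: "w0 \<in> W" "w0 s = 1"
      using fun_subspace_scale[OF insert.prems w(1)] w(2) by (simp_all add: w0_def)
    obtain p where p: "p \<in> W'" "\<forall>w\<in>W'. inner_on S (\<lambda>x. w0 x - p x) w = 0"
      using insert.IH[OF sub'] by blast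
    define d where "d = (\<lambda>x. w0 x - p x)"
    have d: "d \<in> W" "d s = 1"
      using fun_subspace_diff[OF insert.prems w0(1)] p(1) w0(2) by (auto simp: d_def W'_def)
    have "inner_on (insert s S) d d \<noteq> 0"
      using inner_on_self_nonneg[of S d] d(2) insert.hyps by (simp add: inner_on_insert)
    moreover have "\<forall>w\<in>W. \<exists>w'\<in>W'. \<exists>c. w = (\<lambda>x. w' x + c * d x)"
    proof
      fix w assume w: "w \<in> W"
      have "(\<lambda>x. w x - w s * d x) \<in> W'"
        using fun_subspace_diff[OF insert.prems w fun_subspace_scale[OF insert.prems d(1)]] d(2)
        by (simp add: W'_def)
      then show "\<exists>w'\<in>W'. \<exists>c. w = (\<lambda>x. w' x + c * d x)" by force
    qed
    moreover obtain u' where "u' \<in> W'" "\<forall>w\<in>W'. inner_on S (\<lambda>x. v x - u' x) w = 0"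
      using insert.IH[OF sub'] by blast
    moreover from this have "u' \<in> W" "\<forall>w\<in>W'. inner_on (insert s S) (\<lambda>x. v x - u' x) w = 0"
      using inner_W' by (auto simp: W'_def)
    moreover have "\<forall>w\<in>W'. inner_on (insert s S) d w = 0"
      using p(2) inner_W' by (simp add: d_def)
    ultimately show ?thesis
      by (intro orthogonal_projection_extend[OF insert.prems d(1)]) blast+
  qed
qed

lemma eigensp_fun_subspace: "fun_subspace S (eigensp S M t)"
proof -
  have "(\<Sum>y\<in>S. M x y * (c * u y)) = c * (\<Sum>y\<in>S. M x y * u y)" for x c u
    by (simp add: sum_distrib_left algebra_simps)
  moreover have "(\<Sum>y\<in>S. M x y * (u y + w y)) = (\<Sum>y\<in>S. M x y * u y) + (\<Sum>y\<in>S. M x y * w y)"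
    for x u w
    by (simp add: distrib_left sum.distrib)
  ultimately show ?thesis unfolding fun_subspace_def eigensp_def by (auto simp: distrib_left)
qed

lemma spec_proj_unique:
  assumes "finite S"
    and "u \<in> eigensp S M t" "\<forall>w\<in>eigensp S M t. inner_on S (\<lambda>x. v x - u x) w = 0"
    and "u' \<in> eigensp S M t" "\<forall>w\<in>eigensp S M t. inner_on S (\<lambda>x. v x - u' x) w = 0"
  shows "u = u'"
proof -
  define d where "d = (\<lambda>x. u x - u' x)"
  have d: "d \<in> eigensp S M t"
    unfolding d_def using fun_subspace_diff[OF eigensp_fun_subspace assms(2,4)] .
  have "inner_on S (\<lambda>x. v x - u' x) d - inner_on S (\<lambda>x. v x - u x) d = 0"
    using assms(3,5) d by simp
  then have "inner_on S d d = 0"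
    unfolding d_def inner_on_diff_left[symmetric] by (simp add: algebra_simps)
  then have "d x = 0" for x
    using inner_on_self_eq_0[OF assms(1)] d by (cases "x \<in> S") (auto simp: eigensp_def)
  then show ?thesis unfolding d_def by (simp add: fun_eq_iff)
qed

lemma spec_proj_characterization:
  assumes "finite S"
  shows "spec_proj S M t v \<in> eigensp S M t \<and>
    (\<forall>w\<in>eigensp S M t. inner_on S (\<lambda>x. v x - spec_proj S M t v x) w = 0)"
proof -
  obtain u where "u \<in> eigensp S M t" "\<forall>w\<in>eigensp S M t. inner_on S (\<lambda>x. v x - u x) w = 0"
    using orthogonal_projection_exists[OF assms eigensp_fun_subspace] by blast
  then have "\<exists>!u. u \<in> eigensp S M t \<and> (\<forall>w\<in>eigensp S M t. inner_on S (\<lambda>x. v x - u x) w = 0)"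
    using spec_proj_unique[OF assms] by blast
  from theI'[OF this] show ?thesis unfolding spec_proj_def inner_on_def .
qed

lemma spec_proj_in_eigensp: "finite S \<Longrightarrow> spec_proj S M t v \<in> eigensp S M t"
  using spec_proj_characterization by blast

lemma spec_proj_orthogonal:
  "finite S \<Longrightarrow> w \<in> eigensp S M t \<Longrightarrow> inner_on S (\<lambda>x. v x - spec_proj S M t v x) w = 0"
  using spec_proj_characterization by blast

lemma spec_proj_eqI:
  assumes "finite S"
    and "u \<in> eigensp S M t" "\<forall>w\<in>eigensp S M t. inner_on S (\<lambda>x. v x - u x) w = 0"
  shows "spec_proj S M t v = u"
  using spec_proj_unique[OF assms(1) spec_proj_in_eigensp[OF assms(1)] _ assms(2,3)]
    spec_proj_orthogonal[OF assms(1)] by blast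

lemma spec_proj_add:
  assumes "finite S"
  shows "spec_proj S M t (\<lambda>x. u x + v x) = (\<lambda>x. spec_proj S M t u x + spec_proj S M t v x)"
proof (rule spec_proj_eqI[OF assms])
  let ?P = "spec_proj S M t"
  show "(\<lambda>x. ?P u x + ?P v x) \<in> eigensp S M t"
    by (intro fun_subspace_add[OF eigensp_fun_subspace] spec_proj_in_eigensp[OF assms])
  have "(\<lambda>x. u x + v x - (?P u x + ?P v x)) = (\<lambda>x. (u x - ?P u x) + (v x - ?P v x))"
    by auto
  then show "\<forall>w\<in>eigensp S M t. inner_on S (\<lambda>x. u x + v x - (?P u x + ?P v x)) w = 0"
    by (simp add: inner_on_add_left spec_proj_orthogonal[OF assms])
qed

lemma spec_proj_diff:
  assumes "finite S"
  shows "spec_proj S M t (\<lambda>x. u x - v x) = (\<lambda>x. spec_proj S M t u x - spec_proj S M t v x)"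
proof (rule spec_proj_eqI[OF assms])
  let ?P = "spec_proj S M t"
  show "(\<lambda>x. ?P u x - ?P v x) \<in> eigensp S M t"
    by (intro fun_subspace_diff[OF eigensp_fun_subspace] spec_proj_in_eigensp[OF assms])
  have "(\<lambda>x. u x - v x - (?P u x - ?P v x)) = (\<lambda>x. (u x - ?P u x) - (v x - ?P v x))"
    by auto
  then show "\<forall>w\<in>eigensp S M t. inner_on S (\<lambda>x. u x - v x - (?P u x - ?P v x)) w = 0"
    using spec_proj_orthogonal[OF assms]
    by (simp add: inner_on_diff_left[of S "\<lambda>x. u x - ?P u x"])
qed

section \<open>Strong cospectrality through eigenvalue supports\<close>

text \<open>Since \<open>F u = (F (u + v) + F (u - v)) / 2\<close>, the relations \<open>F u = \<plusminus>F v\<close> are read off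
  from the supports of \<open>u + v\<close> and \<open>u - v\<close>.\<close>

lemma strongly_cospectral_iff_supports_disjoint:
  assumes "finite S"
  shows "strongly_cospectral S M u v \<longleftrightarrow>
    eig_support S M (\<lambda>x. u x - v x) \<inter> eig_support S M (\<lambda>x. u x + v x) = {}"
  unfolding strongly_cospectral_def eig_support_def spec_proj_add[OF assms] spec_proj_diff[OF assms]
  by (auto simp: fun_eq_iff eq_neg_iff_add_eq_0)

lemma Psi_plus_eq_supports:
  assumes "finite S"
  shows "Psi_plus S M u v = eig_support S M (\<lambda>x. u x + v x) - eig_support S M (\<lambda>x. u x - v x)"
  unfolding Psi_plus_def eig_support_def spec_proj_add[OF assms] spec_proj_diff[OF assms]
  by (auto simp: fun_eq_iff)

lemma Psi_minus_eq_supports: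
  assumes "finite S"
  shows "Psi_minus S M u v = eig_support S M (\<lambda>x. u x - v x) - eig_support S M (\<lambda>x. u x + v x)"
proof -
  have "(p = (\<lambda>x. - q x) \<and> p \<noteq> (\<lambda>_. 0)) \<longleftrightarrow>
      ((\<lambda>x. p x + q x) = (\<lambda>_. 0) \<and> (\<lambda>x. p x - q x) \<noteq> (\<lambda>_. 0))" for p q :: "'i \<Rightarrow> real"
    by (metis eq_iff_diff_eq_0 eq_neg_iff_add_eq_0 neg_equal_0_iff_equal neg_equal_zero)
  then show ?thesis
    unfolding Psi_minus_def eig_support_def spec_proj_add[OF assms] spec_proj_diff[OF assms]
    by blast
qed

lemma shifted_set_disjoint_iff:
  fixes L :: "real set"
  assumes "-2 \<notin> L"
  shows "L \<inter> ((\<lambda>t. t + 2) ` L \<union> {-2}) = {} \<longleftrightarrow> (\<forall>t\<in>L. \<forall>t'\<in>L. \<bar>t - t'\<bar> \<noteq> 2)"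
proof -
  have "\<bar>t - t'\<bar> = 2 \<longleftrightarrow> t = t' + 2 \<or> t' = t + 2" for t t' :: real
    by linarith
  then show ?thesis using assms by (auto simp: image_iff)
qed

section \<open>The line graph of the prism \<open>X\<^sub>1 \<box> K\<^sub>2\<close>\<close>

declare One_nat_def [simp del] \<comment> \<open>keeps \<open>layer 1\<close> from being rewritten to \<open>layer (Suc 0)\<close>\<close>

definition layer :: "nat \<Rightarrow> 'a set \<Rightarrow> ('a \<times> nat) set" where
  "layer i e = (\<lambda>x. (x, i)) ` e"

definition rung :: "'a \<Rightarrow> ('a \<times> nat) set" where
  "rung x = {(x, 1), (x, 2)}"

lemma fst_layer [simp]: "fst ` layer i e = e"
  by (simp add: layer_def image_image)

lemma fst_rung [simp]: "fst ` rung x = {x}"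
  by (simp add: rung_def)

lemma layer_eq_iff [simp]: "layer i e = layer i e' \<longleftrightarrow> e = e'"
  by (metis fst_layer)

lemma rung_eq_iff [simp]: "rung x = rung y \<longleftrightarrow> x = y"
  by (metis fst_rung the_elem_eq)

lemma mem_layer_iff: "(x, j) \<in> layer i e \<longleftrightarrow> x \<in> e \<and> j = i"
  by (auto simp: layer_def)

lemma layer_neq_layer: "e \<noteq> {} \<Longrightarrow> i \<noteq> j \<Longrightarrow> layer i e \<noteq> layer j e'"
  by (metis equals0I mem_layer_iff)

lemma layer_empty_iff [simp]: "layer i e = {} \<longleftrightarrow> e = {}"
  by (simp add: layer_def)

lemma layer_neq_rung [simp]: "layer i e \<noteq> rung x"
proof
  assume "layer i e = rung x"
  then have "(x, 1) \<in> layer i e" "(x, 2) \<in> layer i e" by (auto simp: rung_def)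
  then show False by (simp add: mem_layer_iff)
qed

lemma rung_neq_layer [simp]: "rung x \<noteq> layer i e"
  using layer_neq_rung by metis

lemma line_adj_layer_layer [simp]: "line_adj (layer i e) (layer i e') = line_adj e e'"
proof -
  have "layer i e \<inter> layer i e' = layer i (e \<inter> e')" by (auto simp: layer_def)
  then show ?thesis by (simp add: line_adj_def)
qed

lemma line_adj_layer_layer_distinct: "i \<noteq> j \<Longrightarrow> line_adj (layer i e) (layer j e') = 0"
  by (auto simp: line_adj_def layer_def)

lemma line_adj_layer_rung:
  assumes "i \<in> {1, 2}"
  shows "line_adj (layer i e) (rung x) = (if x \<in> e then 1 else 0)"
proof -
  have "layer i e \<inter> rung x \<noteq> {} \<longleftrightarrow> x \<in> e"
    using assms by (auto simp: layer_def rung_def)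
  then show ?thesis by (simp add: line_adj_def)
qed

lemma line_adj_rung_layer:
  "i \<in> {1, 2} \<Longrightarrow> line_adj (rung x) (layer i e) = (if x \<in> e then 1 else 0)"
  using line_adj_layer_rung by (metis inf_commute line_adj_def)

lemma line_adj_rung_rung [simp]: "line_adj (rung x) (rung y) = 0"
  by (auto simp: line_adj_def rung_def)

locale prism =
  fixes V1 :: "'a set" and adj1 :: "'a \<Rightarrow> 'a \<Rightarrow> bool"
  assumes finite_V1: "finite V1"
    and adj1_in_V1: "\<And>x y. adj1 x y \<Longrightarrow> x \<in> V1 \<and> y \<in> V1"
    and adj1_irrefl: "\<And>x. \<not> adj1 x x"
begin

definition E1 :: "'a set set" where
  "E1 = graph_edges V1 adj1"

definition EP :: "('a \<times> nat) set set" where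
  "EP = graph_edges (V1 \<times> {1, 2 :: nat})
     (cart_adj adj1 (\<lambda>y y'. y \<in> {1, 2 :: nat} \<and> y' \<in> {1, 2} \<and> y \<noteq> y'))"

lemma E1_elem: "e \<in> E1 \<Longrightarrow> \<exists>x y. e = {x, y} \<and> adj1 x y \<and> x \<noteq> y \<and> x \<in> V1 \<and> y \<in> V1"
  unfolding E1_def graph_edges_def using adj1_irrefl adj1_in_V1 by blast

lemma E1_nonempty: "e \<in> E1 \<Longrightarrow> e \<noteq> {}"
  using E1_elem by blast

lemma finite_E1: "finite E1"
proof (rule finite_subset)
  show "E1 \<subseteq> Pow V1" using E1_elem by blast
qed (use finite_V1 in simp)

lemma EP_eq: "EP = layer 1 ` E1 \<union> layer 2 ` E1 \<union> rung ` V1"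
proof
  show "EP \<subseteq> layer 1 ` E1 \<union> layer 2 ` E1 \<union> rung ` V1"
  proof
    fix s assume "s \<in> EP"
    then obtain x i y j where s: "s = {(x, i), (y, j)}" "x \<in> V1" "y \<in> V1" "i \<in> {1, 2}" "j \<in> {1, 2}"
      and "(x = y \<and> i \<noteq> j) \<or> (i = j \<and> adj1 x y)"
      unfolding EP_def graph_edges_def cart_adj_def by auto
    then consider "s = rung x" | "s = layer i {x, y}" "{x, y} \<in> E1"
      unfolding E1_def graph_edges_def by (auto simp: rung_def layer_def insert_commute)
    then show "s \<in> layer 1 ` E1 \<union> layer 2 ` E1 \<union> rung ` V1"
      by cases (use s in auto)
  qed
next
  have "layer i {x, y} \<in> EP" if "i \<in> {1, 2}" "adj1 x y" for i x y
    using that adj1_in_V1[OF that(2)]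
    unfolding EP_def graph_edges_def cart_adj_def layer_def by auto
  moreover have "rung x \<in> EP" if "x \<in> V1" for x
    using that unfolding EP_def graph_edges_def cart_adj_def rung_def by force
  ultimately show "layer 1 ` E1 \<union> layer 2 ` E1 \<union> rung ` V1 \<subseteq> EP"
    using E1_elem by fastforce
qed

lemma finite_EP: "finite EP"
  unfolding EP_eq using finite_E1 finite_V1 by simp

lemma EP_cases:
  assumes "s \<in> EP"
  obtains (layer1) e where "e \<in> E1" "s = layer 1 e" | (layer2) e where "e \<in> E1" "s = layer 2 e"
    | (rung) x where "x \<in> V1" "s = rung x"
  using assms unfolding EP_eq by blast

lemma layer1_neq_layer2: "e \<in> E1 \<or> e' \<in> E1 \<Longrightarrow> layer 1 e \<noteq> layer 2 e'"
  using layer_neq_layer[of e 1 2 e'] layer_neq_layer[of e' 2 1 e] E1_nonempty by auto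

lemma sum_EP:
  "(\<Sum>s\<in>EP. F s) = (\<Sum>e\<in>E1. F (layer 1 e)) + (\<Sum>e\<in>E1. F (layer 2 e)) + (\<Sum>x\<in>V1. F (rung x))"
proof -
  have "layer 1 ` E1 \<inter> layer 2 ` E1 = {}" "(layer 1 ` E1 \<union> layer 2 ` E1) \<inter> rung ` V1 = {}"
    using layer1_neq_layer2 by auto
  moreover have "inj_on (layer i) E1" "inj_on rung V1" for i
    by (auto intro: inj_onI)
  ultimately show ?thesis
    unfolding EP_eq using finite_E1 finite_V1
    by (simp add: sum.union_disjoint sum.reindex)
qed

definition prism_vec ::
    "('a set \<Rightarrow> real) \<Rightarrow> ('a set \<Rightarrow> real) \<Rightarrow> ('a \<Rightarrow> real) \<Rightarrow> ('a \<times> nat) set \<Rightarrow> real" where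
  "prism_vec g1 g2 r s =
    (if s \<in> layer 1 ` E1 then g1 (fst ` s) else if s \<in> layer 2 ` E1 then g2 (fst ` s)
     else if s \<in> rung ` V1 then r (the_elem (fst ` s)) else 0)"

lemma prism_vec_layer1 [simp]: "e \<in> E1 \<Longrightarrow> prism_vec g1 g2 r (layer 1 e) = g1 e"
  by (simp add: prism_vec_def)

lemma prism_vec_layer2 [simp]: "e \<in> E1 \<Longrightarrow> prism_vec g1 g2 r (layer 2 e) = g2 e"
  using layer1_neq_layer2 by (force simp: prism_vec_def)

lemma prism_vec_rung [simp]: "x \<in> V1 \<Longrightarrow> prism_vec g1 g2 r (rung x) = r x"
  by (auto simp: prism_vec_def)

lemma prism_vec_outside: "s \<notin> EP \<Longrightarrow> prism_vec g1 g2 r s = 0"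
  by (simp add: prism_vec_def EP_eq)

lemma prism_vec_eqI:
  assumes "\<forall>s. s \<notin> EP \<longrightarrow> w s = 0"
    and "\<forall>e\<in>E1. w (layer 1 e) = g1 e" "\<forall>e\<in>E1. w (layer 2 e) = g2 e" "\<forall>x\<in>V1. w (rung x) = r x"
  shows "w = prism_vec g1 g2 r"
proof
  fix s show "w s = prism_vec g1 g2 r s"
    using assms by (cases "s \<in> EP") (auto elim: EP_cases simp: prism_vec_outside)
qed

lemma prism_vec_diff:
  "(\<lambda>s. prism_vec g1 g2 r s - prism_vec g1' g2' r' s) =
     prism_vec (\<lambda>e. g1 e - g1' e) (\<lambda>e. g2 e - g2' e) (\<lambda>x. r x - r' x)"
  by (simp add: prism_vec_def fun_eq_iff)

lemma inner_prism_vec: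
  "inner_on EP (prism_vec g1 g2 r) (prism_vec g1' g2' r') =
     inner_on E1 g1 g1' + inner_on E1 g2 g2' + inner_on V1 r r'"
  unfolding inner_on_def sum_EP by simp

text \<open>With respect to \<open>EP = layer 1 ` E1 \<union> layer 2 ` E1 \<union> rung ` V1\<close> the adjacency matrix of the
  line graph is the block matrix \<open>[[A, 0, N\<^sup>T], [0, A, N\<^sup>T], [N, N, 0]]\<close>, where \<open>A\<close> is the adjacency
  matrix of the line graph of \<open>X\<^sub>1\<close> and \<open>N\<close> the vertex-edge incidence matrix of \<open>X\<^sub>1\<close>.\<close>

definition line_mult :: "('a set \<Rightarrow> real) \<Rightarrow> 'a set \<Rightarrow> real" where
  "line_mult g e = (\<Sum>e'\<in>E1. line_adj e e' * g e')"

definition incid :: "('a set \<Rightarrow> real) \<Rightarrow> 'a \<Rightarrow> real" where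
  "incid g x = (\<Sum>e\<in>E1. if x \<in> e then g e else 0)"

definition incid_T :: "('a \<Rightarrow> real) \<Rightarrow> 'a set \<Rightarrow> real" where
  "incid_T r e = (\<Sum>x\<in>V1. if x \<in> e then r x else 0)"

lemma line_mult_add: "line_mult (\<lambda>e. g e + g' e) e = line_mult g e + line_mult g' e"
  by (simp add: line_mult_def distrib_left sum.distrib)

lemma line_mult_diff: "line_mult (\<lambda>e. g e - g' e) e = line_mult g e - line_mult g' e"
  by (simp add: line_mult_def right_diff_distrib sum_subtractf)

lemma line_mult_scale: "line_mult (\<lambda>e. c * g e) e = c * line_mult g e"
  by (simp add: line_mult_def sum_distrib_left algebra_simps)

lemma incid_scale: "incid (\<lambda>e. c * g e) x = c * incid g x"
  unfolding incid_def sum_distrib_left by (intro sum.cong) auto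

lemma incid_T_scale: "incid_T (\<lambda>x. c * r x) e = c * incid_T r e"
  unfolding incid_T_def sum_distrib_left by (intro sum.cong) auto

lemma incid_T_cong: "(\<And>x. x \<in> V1 \<Longrightarrow> r x = r' x) \<Longrightarrow> incid_T r e = incid_T r' e"
  unfolding incid_T_def by (intro sum.cong) auto

lemma inner_incid: "inner_on V1 (incid g) r = inner_on E1 g (incid_T r)"
proof -
  have "inner_on V1 (incid g) r = (\<Sum>x\<in>V1. \<Sum>e\<in>E1. if x \<in> e then g e * r x else 0)"
    unfolding inner_on_def incid_def sum_distrib_right by (intro sum.cong) auto
  also have "\<dots> = (\<Sum>e\<in>E1. \<Sum>x\<in>V1. if x \<in> e then g e * r x else 0)"
    by (rule sum.swap)
  also have "\<dots> = inner_on E1 g (incid_T r)"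
    unfolding inner_on_def incid_T_def sum_distrib_left by (intro sum.cong) auto
  finally show ?thesis .
qed

text \<open>\<open>N\<^sup>T N = A + 2 I\<close>: two distinct edges of a simple graph share at most one endpoint.\<close>
lemma incid_T_incid: "e \<in> E1 \<Longrightarrow> incid_T (incid g) e = line_mult g e + 2 * g e"
proof -
  assume e: "e \<in> E1"
  then obtain x y where xy: "e = {x, y}" "x \<noteq> y" "x \<in> V1" "y \<in> V1"
    using E1_elem by blast
  have "incid_T (incid g) e = sum (incid g) (V1 \<inter> e)"
    unfolding incid_T_def using finite_V1 by (simp add: sum.inter_restrict)
  also have "V1 \<inter> e = {x, y}"
    using xy by auto
  also have "sum (incid g) {x, y} = incid g x + incid g y"
    using xy by simp
  also have "\<dots> = (\<Sum>e'\<in>E1. line_adj e e' * g e' + (if e' = e then 2 * g e' else 0))"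
    unfolding incid_def sum.distrib[symmetric]
  proof (intro sum.cong refl)
    fix e' assume "e' \<in> E1"
    then obtain u v where uv: "e' = {u, v}" "u \<noteq> v"
      using E1_elem by blast
    have "e' \<noteq> e \<Longrightarrow> \<not> (x \<in> e' \<and> y \<in> e')"
      using xy uv by auto
    then show "(if x \<in> e' then g e' else 0) + (if y \<in> e' then g e' else 0) =
        line_adj e e' * g e' + (if e' = e then 2 * g e' else 0)"
      using xy by (auto simp: line_adj_def)
  qed
  also have "\<dots> = line_mult g e + 2 * g e"
    using e finite_E1 by (simp add: sum.distrib line_mult_def)
  finally show ?thesis .
qed

lemma adj_mult_prism_vec_layer1:
  "e \<in> E1 \<Longrightarrow> (\<Sum>s\<in>EP. line_adj (layer 1 e) s * prism_vec g1 g2 r s) = line_mult g1 e + incid_T r e"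
  unfolding sum_EP line_mult_def incid_T_def
  by (auto simp: line_adj_layer_layer_distinct line_adj_layer_rung intro!: sum.cong)

lemma adj_mult_prism_vec_layer2:
  "e \<in> E1 \<Longrightarrow> (\<Sum>s\<in>EP. line_adj (layer 2 e) s * prism_vec g1 g2 r s) = line_mult g2 e + incid_T r e"
  unfolding sum_EP line_mult_def incid_T_def
  by (auto simp: line_adj_layer_layer_distinct line_adj_layer_rung intro!: sum.cong)

lemma adj_mult_prism_vec_rung:
  "x \<in> V1 \<Longrightarrow> (\<Sum>s\<in>EP. line_adj (rung x) s * prism_vec g1 g2 r s) = incid (\<lambda>e. g1 e + g2 e) x"
  unfolding sum_EP incid_def
  by (auto simp: line_adj_rung_layer sum.distrib[symmetric] intro!: sum.cong)

lemma ball_EP: "(\<forall>s\<in>EP. P s) \<longleftrightarrow> (\<forall>e\<in>E1. P (layer 1 e)) \<and> (\<forall>e\<in>E1. P (layer 2 e)) \<and> (\<forall>x\<in>V1. P (rung x))"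
  unfolding EP_eq by blast

lemma eigensp_prism_vec_iff:
  "prism_vec g1 g2 r \<in> eigensp EP line_adj t \<longleftrightarrow>
     (\<forall>e\<in>E1. line_mult g1 e + incid_T r e = t * g1 e \<and> line_mult g2 e + incid_T r e = t * g2 e) \<and>
     (\<forall>x\<in>V1. incid (\<lambda>e. g1 e + g2 e) x = t * r x)"
proof -
  have "prism_vec g1 g2 r \<in> eigensp EP line_adj t \<longleftrightarrow>
      (\<forall>s\<in>EP. (\<Sum>s'\<in>EP. line_adj s s' * prism_vec g1 g2 r s') = t * prism_vec g1 g2 r s)"
    unfolding eigensp_def using prism_vec_outside by auto
  then show ?thesis
    unfolding ball_EP
    by (auto simp: adj_mult_prism_vec_layer1 adj_mult_prism_vec_layer2 adj_mult_prism_vec_rung)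
qed

lemma eigensp_E1_iff:
  "g \<in> eigensp E1 line_adj t \<longleftrightarrow> (\<forall>e. e \<notin> E1 \<longrightarrow> g e = 0) \<and> (\<forall>e\<in>E1. line_mult g e = t * g e)"
  unfolding eigensp_def line_mult_def by blast

definition layer_part :: "nat \<Rightarrow> (('a \<times> nat) set \<Rightarrow> real) \<Rightarrow> 'a set \<Rightarrow> real" where
  "layer_part i w e = (if e \<in> E1 then w (layer i e) else 0)"

definition rung_part :: "(('a \<times> nat) set \<Rightarrow> real) \<Rightarrow> 'a \<Rightarrow> real" where
  "rung_part w x = w (rung x)"

lemma prism_vec_parts:
  assumes "w \<in> eigensp EP line_adj t"
  shows "w = prism_vec (layer_part 1 w) (layer_part 2 w) (rung_part w)"
  using assms by (intro prism_vec_eqI) (auto simp: eigensp_def layer_part_def rung_part_def)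

lemma eigen_equations_parts:
  assumes "w \<in> eigensp EP line_adj t"
  shows "e \<in> E1 \<Longrightarrow> line_mult (layer_part 1 w) e + incid_T (rung_part w) e = t * layer_part 1 w e"
    and "e \<in> E1 \<Longrightarrow> line_mult (layer_part 2 w) e + incid_T (rung_part w) e = t * layer_part 2 w e"
    and "x \<in> V1 \<Longrightarrow> incid (\<lambda>e. layer_part 1 w e + layer_part 2 w e) x = t * rung_part w x"
proof -
  from assms have "prism_vec (layer_part 1 w) (layer_part 2 w) (rung_part w) \<in> eigensp EP line_adj t"
    by (subst (asm) prism_vec_parts[OF assms])
  then show "e \<in> E1 \<Longrightarrow> line_mult (layer_part 1 w) e + incid_T (rung_part w) e = t * layer_part 1 w e"
    and "e \<in> E1 \<Longrightarrow> line_mult (layer_part 2 w) e + incid_T (rung_part w) e = t * layer_part 2 w e"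
    and "x \<in> V1 \<Longrightarrow> incid (\<lambda>e. layer_part 1 w e + layer_part 2 w e) x = t * rung_part w x"
    unfolding eigensp_prism_vec_iff by blast+
qed

lemma layer_parts_diff_eigensp:
  assumes "w \<in> eigensp EP line_adj t"
  shows "(\<lambda>e. layer_part 1 w e - layer_part 2 w e) \<in> eigensp E1 line_adj t"
proof -
  have "line_mult (\<lambda>e. layer_part 1 w e - layer_part 2 w e) e =
      t * (layer_part 1 w e - layer_part 2 w e)" if "e \<in> E1" for e
    using eigen_equations_parts(1,2)[OF assms that] unfolding line_mult_diff right_diff_distrib
    by linarith
  then show ?thesis
    unfolding eigensp_E1_iff by (simp add: layer_part_def)
qed

text \<open>On the sum \<open>G = w\<^sub>1 + w\<^sub>2\<close> of the layer parts, \<open>N G = t r\<close> and \<open>A G + 2 N\<^sup>T r = t G\<close>; together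
  with \<open>N\<^sup>T N = A + 2 I\<close> this gives \<open>(t + 2) N\<^sup>T r = (t + 2) G\<close>.\<close>
lemma layer_parts_sum:
  assumes t: "t \<noteq> -2" and w: "w \<in> eigensp EP line_adj t" and e: "e \<in> E1"
  shows "incid_T (rung_part w) e = layer_part 1 w e + layer_part 2 w e"
    and "line_mult (\<lambda>e. layer_part 1 w e + layer_part 2 w e) e =
           (t - 2) * (layer_part 1 w e + layer_part 2 w e)"
proof -
  let ?G = "\<lambda>e. layer_part 1 w e + layer_part 2 w e"
  have "\<forall>x\<in>V1. incid ?G x = t * rung_part w x"
    using eigen_equations_parts(3)[OF w] by blast
  then have "incid_T (incid ?G) e = t * incid_T (rung_part w) e"
    by (simp add: incid_T_cong[of "incid ?G"] incid_T_scale)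
  then have "line_mult ?G e + 2 * ?G e = t * incid_T (rung_part w) e"
    by (simp add: incid_T_incid[OF e])
  moreover have "line_mult ?G e + 2 * incid_T (rung_part w) e = t * ?G e"
    using eigen_equations_parts(1,2)[OF w e] unfolding line_mult_add distrib_left by linarith
  ultimately have "(t + 2) * incid_T (rung_part w) e = (t + 2) * ?G e"
    by (simp add: algebra_simps)
  then show "incid_T (rung_part w) e = ?G e"
    using t by simp
  with \<open>line_mult ?G e + 2 * incid_T (rung_part w) e = t * ?G e\<close>
  show "line_mult ?G e = (t - 2) * ?G e"
    by (simp add: algebra_simps)
qed

lemma layer_parts_sum_eigensp:
  assumes "t \<noteq> -2" "w \<in> eigensp EP line_adj t"
  shows "(\<lambda>e. layer_part 1 w e + layer_part 2 w e) \<in> eigensp E1 line_adj (t - 2)"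
  unfolding eigensp_E1_iff using layer_parts_sum(2)[OF assms] by (simp add: layer_part_def)

lemma prism_vec_eq_0_iff:
  "prism_vec g1 g2 r = (\<lambda>_. 0) \<longleftrightarrow>
     (\<forall>e\<in>E1. g1 e = 0 \<and> g2 e = 0) \<and> (\<forall>x\<in>V1. r x = 0)"
proof
  assume "prism_vec g1 g2 r = (\<lambda>_. 0)"
  then show "(\<forall>e\<in>E1. g1 e = 0 \<and> g2 e = 0) \<and> (\<forall>x\<in>V1. r x = 0)"
    by (metis prism_vec_layer1 prism_vec_layer2 prism_vec_rung)
next
  assume "(\<forall>e\<in>E1. g1 e = 0 \<and> g2 e = 0) \<and> (\<forall>x\<in>V1. r x = 0)"
  then show "prism_vec g1 g2 r = (\<lambda>_. 0)"
    by (intro prism_vec_eqI[symmetric]) auto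
qed

text \<open>An eigenvector \<open>g\<close> of \<open>A\<close> for \<open>t - 2\<close> lifts to the eigenvector \<open>(c g, c g, d N g)\<close> for \<open>t\<close>:
  with \<open>N\<^sup>T N = A + 2 I\<close> the layer equations become \<open>c (t - 2) + d t = c t\<close> and the rung equation
  becomes \<open>2 c = d t\<close>.  (At \<open>t = -2\<close> division by zero makes the lift the zero vector.)\<close>
lemma lift_eigensp:
  assumes g: "g \<in> eigensp E1 line_adj (t - 2)"
  defines "c \<equiv> t / (t + 2)" and "d \<equiv> 2 / (t + 2)"
  shows "prism_vec (\<lambda>e. c * g e) (\<lambda>e. c * g e) (\<lambda>x. d * incid g x) \<in> eigensp EP line_adj t"
proof -
  have "c * (t - 2) + d * t = (t * (t - 2) + 2 * t) / (t + 2)"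
    unfolding c_def d_def by (simp add: add_divide_distrib)
  also have "t * (t - 2) + 2 * t = t * t"
    by (simp add: algebra_simps)
  finally have layer_eq: "c * (t - 2) + d * t = t * c"
    unfolding c_def by simp
  have rung_eq: "2 * c = t * d"
    by (simp add: c_def d_def)
  have "line_mult (\<lambda>e. c * g e) e + incid_T (\<lambda>x. d * incid g x) e = t * (c * g e)"
    if e: "e \<in> E1" for e
  proof -
    have ge: "line_mult g e = (t - 2) * g e"
      using g e unfolding eigensp_E1_iff by blast
    have "line_mult (\<lambda>e. c * g e) e + incid_T (\<lambda>x. d * incid g x) e =
        c * line_mult g e + d * (line_mult g e + 2 * g e)"
      using incid_T_incid[OF e] by (simp add: line_mult_scale incid_T_scale)
    also have "\<dots> = (c * (t - 2) + d * t) * g e"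
      unfolding ge by (simp add: algebra_simps)
    finally show ?thesis using layer_eq by simp
  qed
  moreover have "incid (\<lambda>e. c * g e + c * g e) x = t * (d * incid g x)" for x
    using rung_eq incid_scale[of 2 "\<lambda>e. c * g e" x] incid_scale[of c g x] by (simp add: algebra_simps)
  ultimately show ?thesis
    unfolding eigensp_prism_vec_iff by blast
qed

end

section \<open>The two copies of an edge of \<open>X\<^sub>1\<close>\<close>

locale prism_edge = prism +
  fixes a b :: 'a
  assumes adj_ab: "adj1 a b"
begin

definition f :: "'a set \<Rightarrow> real" where
  "f = vertex_state {a, b}"

definition h :: "nat \<Rightarrow> ('a \<times> nat) set \<Rightarrow> real" where
  "h i = vertex_state (layer i {a, b})"

definition Q :: "real \<Rightarrow> 'a set \<Rightarrow> real" where
  "Q t = spec_proj E1 line_adj t f"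

lemma ab_in_E1: "{a, b} \<in> E1"
  unfolding E1_def graph_edges_def using adj_ab adj1_in_V1 by blast

lemma inner_f_f: "inner_on E1 f f = 1"
proof -
  have "inner_on E1 f f = (\<Sum>e\<in>E1. if e = {a, b} then 1 else 0)"
    unfolding inner_on_def f_def vertex_state_def by (intro sum.cong) auto
  then show ?thesis
    using ab_in_E1 finite_E1 by simp
qed

lemma h_values:
  assumes "i \<in> {1, 2}"
  shows "s \<notin> EP \<Longrightarrow> h i s = 0"
    and "h i (rung x) = 0"
    and "e \<in> E1 \<Longrightarrow> h i (layer i e) = f e"
    and "j \<in> {1, 2} \<Longrightarrow> j \<noteq> i \<Longrightarrow> h i (layer j e) = 0"
proof -
  have "layer i {a, b} \<in> EP"
    unfolding EP_eq using assms ab_in_E1 by blast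
  then show "s \<notin> EP \<Longrightarrow> h i s = 0"
    by (auto simp: h_def vertex_state_def)
  show "h i (rung x) = 0" "e \<in> E1 \<Longrightarrow> h i (layer i e) = f e"
    by (simp_all add: h_def f_def vertex_state_def)
  show "j \<in> {1, 2} \<Longrightarrow> j \<noteq> i \<Longrightarrow> h i (layer j e) = 0"
    using layer_neq_layer[of "{a, b}" i j e] by (auto simp: h_def vertex_state_def)
qed

lemma h_diff: "(\<lambda>s. h 1 s - h 2 s) = prism_vec f (\<lambda>e. - f e) (\<lambda>_. 0)"
  by (rule prism_vec_eqI) (simp_all add: h_values)

lemma h_sum: "(\<lambda>s. h 1 s + h 2 s) = prism_vec f f (\<lambda>_. 0)"
  by (rule prism_vec_eqI) (simp_all add: h_values)

lemma Q_eigensp: "Q t \<in> eigensp E1 line_adj t"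
  unfolding Q_def by (rule spec_proj_in_eigensp[OF finite_E1])

lemma Q_orthogonal: "g \<in> eigensp E1 line_adj t \<Longrightarrow> inner_on E1 (\<lambda>e. f e - Q t e) g = 0"
  unfolding Q_def by (rule spec_proj_orthogonal[OF finite_E1])

lemma mem_eig_support_f_iff: "t \<in> eig_support E1 line_adj f \<longleftrightarrow> (\<exists>e\<in>E1. Q t e \<noteq> 0)"
  using Q_eigensp[of t] unfolding eig_support_def Q_def[symmetric] eigensp_E1_iff by (auto simp: fun_eq_iff)

lemma spec_proj_h_diff:
  "spec_proj EP line_adj t (\<lambda>s. h 1 s - h 2 s) = prism_vec (Q t) (\<lambda>e. - Q t e) (\<lambda>_. 0)"
proof (rule spec_proj_eqI[OF finite_EP])
  have "line_mult (\<lambda>e. - Q t e) e = - line_mult (Q t) e" for e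
    by (simp add: line_mult_def sum_negf)
  then show "prism_vec (Q t) (\<lambda>e. - Q t e) (\<lambda>_. 0) \<in> eigensp EP line_adj t"
    using Q_eigensp[of t] unfolding eigensp_prism_vec_iff eigensp_E1_iff
    by (simp add: incid_def incid_T_def)
  show "\<forall>w\<in>eigensp EP line_adj t.
      inner_on EP (\<lambda>s. h 1 s - h 2 s - prism_vec (Q t) (\<lambda>e. - Q t e) (\<lambda>_. 0) s) w = 0"
  proof
    fix w assume w: "w \<in> eigensp EP line_adj t"
    let ?w1 = "layer_part 1 w" and ?w2 = "layer_part 2 w"
    have "inner_on EP (\<lambda>s. h 1 s - h 2 s - prism_vec (Q t) (\<lambda>e. - Q t e) (\<lambda>_. 0) s) w =
        inner_on EP (prism_vec (\<lambda>e. f e - Q t e) (\<lambda>e. - f e - - Q t e) (\<lambda>x. 0 - 0))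
          (prism_vec ?w1 ?w2 (rung_part w))"
      unfolding fun_cong[OF h_diff] prism_vec_diff by (rule arg_cong[OF prism_vec_parts[OF w]])
    also have "\<dots> = inner_on E1 (\<lambda>e. f e - Q t e) (\<lambda>e. ?w1 e - ?w2 e)"
      unfolding inner_prism_vec
      by (simp add: inner_on_def sum_subtractf[symmetric] sum.distrib[symmetric] algebra_simps)
    also have "\<dots> = 0"
      using Q_orthogonal layer_parts_diff_eigensp[OF w] by blast
    finally show "inner_on EP (\<lambda>s. h 1 s - h 2 s - prism_vec (Q t) (\<lambda>e. - Q t e) (\<lambda>_. 0) s) w = 0" .
  qed
qed

text \<open>Orthogonality of the residual to every eigenvector \<open>w = (w\<^sub>1, w\<^sub>2, r)\<close> reduces, through
  \<open>N\<^sup>T r = w\<^sub>1 + w\<^sub>2\<close>, to \<open>f - (c + d) g \<perp> w\<^sub>1 + w\<^sub>2\<close>; this is why \<open>c + d = 1\<close>.\<close>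
lemma spec_proj_h_sum:
  assumes t: "t \<noteq> -2"
  defines "c \<equiv> t / (t + 2)" and "d \<equiv> 2 / (t + 2)"
  shows "spec_proj EP line_adj t (\<lambda>s. h 1 s + h 2 s) =
    prism_vec (\<lambda>e. c * Q (t - 2) e) (\<lambda>e. c * Q (t - 2) e) (\<lambda>x. d * incid (Q (t - 2)) x)"
proof (rule spec_proj_eqI[OF finite_EP])
  let ?g = "Q (t - 2)"
  show "prism_vec (\<lambda>e. c * ?g e) (\<lambda>e. c * ?g e) (\<lambda>x. d * incid ?g x) \<in> eigensp EP line_adj t"
    unfolding c_def d_def by (rule lift_eigensp[OF Q_eigensp])
  have d: "d = 1 - c"
    using t by (simp add: c_def d_def field_simps)
  show "\<forall>w\<in>eigensp EP line_adj t. inner_on EP (\<lambda>s. h 1 s + h 2 s -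
      prism_vec (\<lambda>e. c * ?g e) (\<lambda>e. c * ?g e) (\<lambda>x. d * incid ?g x) s) w = 0"
  proof
    fix w assume w: "w \<in> eigensp EP line_adj t"
    let ?G = "\<lambda>e. layer_part 1 w e + layer_part 2 w e"
    have "inner_on EP (\<lambda>s. h 1 s + h 2 s -
        prism_vec (\<lambda>e. c * ?g e) (\<lambda>e. c * ?g e) (\<lambda>x. d * incid ?g x) s) w =
      inner_on EP (prism_vec (\<lambda>e. f e - c * ?g e) (\<lambda>e. f e - c * ?g e) (\<lambda>x. 0 - d * incid ?g x))
        (prism_vec (layer_part 1 w) (layer_part 2 w) (rung_part w))"
      unfolding fun_cong[OF h_sum] prism_vec_diff by (rule arg_cong[OF prism_vec_parts[OF w]])
    also have "\<dots> = inner_on E1 (\<lambda>e. f e - c * ?g e) ?G - d * inner_on V1 (incid ?g) (rung_part w)"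
      unfolding inner_prism_vec
      by (simp add: inner_on_def sum_subtractf[symmetric] sum.distrib[symmetric]
          sum_distrib_left algebra_simps)
    also have "inner_on V1 (incid ?g) (rung_part w) = inner_on E1 ?g ?G"
      unfolding inner_incid unfolding inner_on_def
      by (intro sum.cong) (simp_all add: layer_parts_sum(1)[OF t w])
    also have "inner_on E1 (\<lambda>e. f e - c * ?g e) ?G - d * inner_on E1 ?g ?G =
        inner_on E1 (\<lambda>e. f e - ?g e) ?G"
      unfolding d by (simp add: inner_on_diff_left inner_on_scale_left algebra_simps)
    also have "\<dots> = 0"
      using Q_orthogonal layer_parts_sum_eigensp[OF t w] by blast
    finally show "inner_on EP (\<lambda>s. h 1 s + h 2 s -
        prism_vec (\<lambda>e. c * ?g e) (\<lambda>e. c * ?g e) (\<lambda>x. d * incid ?g x) s) w = 0" .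
  qed
qed

text \<open>At \<open>t = -2\<close> the vector \<open>(f, f, -N f)\<close> is an eigenvector, and it is not orthogonal to \<open>h\<^sub>1 + h\<^sub>2\<close>.\<close>
lemma spec_proj_h_sum_minus_2: "spec_proj EP line_adj (-2) (\<lambda>s. h 1 s + h 2 s) \<noteq> (\<lambda>_. 0)"
proof
  assume proj: "spec_proj EP line_adj (-2) (\<lambda>s. h 1 s + h 2 s) = (\<lambda>_. 0)"
  define w where "w = prism_vec f f (\<lambda>x. - incid f x)"
  have "w \<in> eigensp EP line_adj (-2)"
    unfolding w_def eigensp_prism_vec_iff
    using incid_T_scale[of "-1" "incid f"] incid_scale[of 2 f] by (simp add: incid_T_incid)
  then have "inner_on EP (\<lambda>s. h 1 s + h 2 s) w = 0"
    using spec_proj_orthogonal[OF finite_EP, of w line_adj "-2" "\<lambda>s. h 1 s + h 2 s"] proj by simp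
  moreover have "inner_on EP (\<lambda>s. h 1 s + h 2 s) w = 2"
    unfolding h_sum w_def inner_prism_vec inner_f_f by (simp add: inner_on_def)
  ultimately show False by simp
qed

lemma eig_support_h_diff:
  "eig_support EP line_adj (\<lambda>s. h 1 s - h 2 s) = eig_support E1 line_adj f"
proof (rule set_eqI)
  fix t show "t \<in> eig_support EP line_adj (\<lambda>s. h 1 s - h 2 s) \<longleftrightarrow> t \<in> eig_support E1 line_adj f"
    unfolding mem_eig_support_f_iff by (simp add: eig_support_def spec_proj_h_diff prism_vec_eq_0_iff)
qed

lemma eig_support_h_sum:
  assumes "-2 \<notin> eig_support E1 line_adj f"
  shows "eig_support EP line_adj (\<lambda>s. h 1 s + h 2 s) = (\<lambda>t. t + 2) ` eig_support E1 line_adj f \<union> {-2}"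
proof (rule set_eqI)
  fix t
  show "t \<in> eig_support EP line_adj (\<lambda>s. h 1 s + h 2 s) \<longleftrightarrow>
      t \<in> (\<lambda>t. t + 2) ` eig_support E1 line_adj f \<union> {-2}"
  proof (cases "t = -2")
    case True
    then show ?thesis using spec_proj_h_sum_minus_2 by (simp add: eig_support_def)
  next
    case False
    have "t \<in> (\<lambda>t. t + 2) ` eig_support E1 line_adj f \<union> {-2} \<longleftrightarrow> t - 2 \<in> eig_support E1 line_adj f"
      using False by (force simp: image_iff)
    moreover have "t \<in> eig_support EP line_adj (\<lambda>s. h 1 s + h 2 s) \<longleftrightarrow> (\<exists>e\<in>E1. Q (t - 2) e \<noteq> 0)"
    proof -
      have "t \<noteq> 0" if "\<exists>e\<in>E1. Q (t - 2) e \<noteq> 0"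
        using assms that unfolding mem_eig_support_f_iff by auto
      moreover have "incid (Q (t - 2)) x = 0" if "\<forall>e\<in>E1. Q (t - 2) e = 0" for x
        unfolding incid_def using that by (intro sum.neutral) simp
      ultimately show ?thesis
        using False by (auto simp: eig_support_def spec_proj_h_sum prism_vec_eq_0_iff)
    qed
    ultimately show ?thesis
      unfolding mem_eig_support_f_iff by simp
  qed
qed

end

theorem mainTheorem18:
  fixes V1 :: "'a set" and adj1 :: "'a \<Rightarrow> 'a \<Rightarrow> bool" and a b :: 'a
  assumes "finite V1" and "card V1 \<ge> 2"
    and "\<And>x y. adj1 x y \<Longrightarrow> x \<in> V1 \<and> y \<in> V1"
    and "\<And>x y. adj1 x y \<Longrightarrow> adj1 y x"
    and "\<And>x. \<not> adj1 x x"
    and "graph_connected V1 adj1"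
    and "adj1 a b"
    and "-2 \<notin> eig_support (graph_edges V1 adj1) line_adj (vertex_state {a, b})"
  defines "V \<equiv> V1 \<times> {1, 2 :: nat}"
    and "adj \<equiv> cart_adj adj1 (\<lambda>y y'. y \<in> {1, 2 :: nat} \<and> y' \<in> {1, 2} \<and> y \<noteq> y')"
    and "\<Lambda> \<equiv> eig_support (graph_edges V1 adj1) line_adj (vertex_state {a, b})"
    and "h1 \<equiv> vertex_state {(a, 1 :: nat), (b, 1)}"
    and "h2 \<equiv> vertex_state {(a, 2 :: nat), (b, 2)}"
  shows "(strongly_cospectral (graph_edges V adj) line_adj h1 h2 \<longleftrightarrow>
           (\<forall>t\<in>\<Lambda>. \<forall>t'\<in>\<Lambda>. \<bar>t - t'\<bar> \<noteq> 2))
    \<and> (strongly_cospectral (graph_edges V adj) line_adj h1 h2 \<longrightarrow>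
         Psi_minus (graph_edges V adj) line_adj h1 h2 = \<Lambda> \<and>
         Psi_plus (graph_edges V adj) line_adj h1 h2 = (\<lambda>t. t + 2) ` \<Lambda> \<union> {-2})"
proof -
  interpret prism_edge V1 adj1 a b
    using assms(1,3,5,7) by unfold_locales auto
  have edges: "graph_edges V adj = EP"
    unfolding EP_def V_def adj_def ..
  have h: "h1 = h 1" "h2 = h 2"
    unfolding h1_def h2_def h_def layer_def by simp_all
  have \<Lambda>: "\<Lambda> = eig_support E1 line_adj f" and "-2 \<notin> \<Lambda>"
    using assms(8) unfolding \<Lambda>_def E1_def f_def by simp_all
  then have diff: "eig_support EP line_adj (\<lambda>s. h1 s - h2 s) = \<Lambda>"
    and sum: "eig_support EP line_adj (\<lambda>s. h1 s + h2 s) = (\<lambda>t. t + 2) ` \<Lambda> \<union> {-2}"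
    unfolding h by (simp_all add: eig_support_h_diff eig_support_h_sum)
  show ?thesis
    unfolding edges strongly_cospectral_iff_supports_disjoint[OF finite_EP]
      Psi_minus_eq_supports[OF finite_EP] Psi_plus_eq_supports[OF finite_EP] diff sum
    using shifted_set_disjoint_iff[OF \<open>-2 \<notin> \<Lambda>\<close>] by blast
qed

end
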